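(* Let $\lambda_0, \lambda_1$ be real numbers and $z = a + bi$ with $a \in \mathbb{R}$ and $b > 0$. Suppose $\lambda_0 \geq \max\{\lambda_1, |z|\}$. Then $\lambda_0, \lambda_1, z, \overline{z}$ are the eigenvalues of a $4 \times 4$ normal centrosymmetric nonnegative matrix if and only if $\lambda_0 + \lambda_1 - 2|a| \geq 0$ and $\lambda_0 - \lambda_1 - 2|b| \geq 0$.
   Context: $J$ is the $4 \times 4$ reverse identity matrix (ones on the anti-diagonal, zeros elsewhere). A matrix $Q$ is centrosymmetric if $JQJ = Q$, nonnegative if all entries are nonnegative, and normal if $QQ^* = Q^*Q$. *)

theory Defs
  imports "Jordan_Normal_Form.Char_Poly" "HOL-Library.Multiset"
begin

definition J4 :: "real mat" where
  "J4 = mat 4 4 (\<lambda>(i,j). if i + j = 3 then 1 else 0)"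

definition centrosymmetric4 :: "real mat \<Rightarrow> bool" where
  "centrosymmetric4 Q \<longleftrightarrow> J4 * Q * J4 = Q"

definition nonneg_mat :: "real mat \<Rightarrow> bool" where
  "nonneg_mat Q \<longleftrightarrow> (\<forall>i < dim_row Q. \<forall>j < dim_col Q. Q $$ (i,j) \<ge> 0)"

definition normal_real_mat :: "real mat \<Rightarrow> bool" where
  "normal_real_mat Q \<longleftrightarrow> Q * transpose_mat Q = transpose_mat Q * Q"

text \<open>The eigenvalues (with algebraic multiplicity) of a real square matrix Q
  form the multiset L: its characteristic polynomial over C splits with roots L.\<close>
definition eigenvalues_are :: "real mat \<Rightarrow> complex multiset \<Rightarrow> bool" where
  "eigenvalues_are Q L \<longleftrightarrow>
     char_poly (map_mat complex_of_real Q) = (\<Prod>x\<in>#L. [:- x, 1:])"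

end

theory Submission
  imports Defs
begin

text \<open>A centrosymmetric Q with first rows x, y is similar to the block diagonal matrix
  diag(M, N) with M = [[x0+x3, x1+x2], [y0+y3, y1+y2]] and N = [[x0-x3, x1-x2], [y0-y3, y1-y2]].
  If Q is nonnegative, so is M, hence M has real eigenvalues; thus z and its conjugate are the
  eigenvalues of N, and l0, l1 those of M. Normality of Q makes N normal, and a normal real
  2 x 2 matrix with eigenvalues a +- bi is [[a, +-b], [-+b, a]]. As M dominates |N| entrywise,
  the diagonal of M is at least |a| and its off-diagonal entries at least b, so the trace and the
  discriminant of M give l0 + l1 \<ge> 2|a| and l0 - l1 \<ge> 2b. Conversely M = [[p, q], [q, p]] with
  p = (l0 + l1)/2, q = (l0 - l1)/2 and N = [[a, -b], [b, a]] glue to a nonnegative normal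
  centrosymmetric matrix.\<close>

definition mat2 :: "'a \<Rightarrow> 'a \<Rightarrow> 'a \<Rightarrow> 'a \<Rightarrow> 'a mat" where
  "mat2 p q r s = mat 2 2 (\<lambda>(i,j). [[p, q], [r, s]] ! i ! j)"

definition centro_mat :: "'a \<Rightarrow> 'a \<Rightarrow> 'a \<Rightarrow> 'a \<Rightarrow> 'a \<Rightarrow> 'a \<Rightarrow> 'a \<Rightarrow> 'a \<Rightarrow> 'a mat" where
  "centro_mat x0 x1 x2 x3 y0 y1 y2 y3 =
     mat 4 4 (\<lambda>(i,j). [[x0, x1, x2, x3], [y0, y1, y2, y3], [y3, y2, y1, y0], [x3, x2, x1, x0]] ! i ! j)"

lemma less_4_cases: "(i::nat) < 4 \<longleftrightarrow> i = 0 \<or> i = 1 \<or> i = 2 \<or> i = 3"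
  by auto

lemma sum_lessThan_4: "(\<Sum>i\<in>{0..<4::nat}. f i) = f 0 + f 1 + f 2 + f 3"
  by (simp add: eval_nat_numeral)

lemma mat2_carrier [simp]: "mat2 p q r s \<in> carrier_mat 2 2"
  by (simp add: mat2_def)

lemma centro_mat_carrier [simp]: "centro_mat x0 x1 x2 x3 y0 y1 y2 y3 \<in> carrier_mat 4 4"
  by (simp add: centro_mat_def)

lemma det_mat2: "det (mat2 p q r (s :: 'a :: comm_ring_1)) = p * s - q * r"
proof -
  have "det (mat2 p q r s) = (\<Sum>i<2. mat2 p q r s $$ (i,0) * cofactor (mat2 p q r s) i 0)"
    by (rule laplace_expansion_column[OF mat2_carrier]) simp
  also have "\<dots> = p * s - q * r"
    by (simp add: eval_nat_numeral cofactor_def det_single mat_delete_def mat2_def insert_index_def)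
  finally show ?thesis .
qed

lemma char_poly_mat2: "char_poly (mat2 p q r (s :: 'a :: comm_ring_1)) = [:p * s - q * r, - (p + s), 1:]"
proof -
  have "char_poly_matrix (mat2 p q r s) = mat2 [:-p, 1:] [:-q:] [:-r:] [:-s, 1:]"
    by (rule eq_matI) (auto simp: char_poly_matrix_def mat2_def less_Suc_eq numeral_eq_Suc)
  then show ?thesis
    by (simp add: char_poly_def det_mat2 algebra_simps)
qed

lemma char_poly_block_diag:
  fixes A :: "'a :: idom mat"
  assumes A: "A \<in> carrier_mat n n" and B: "B \<in> carrier_mat m m"
  shows "char_poly (four_block_mat A (0\<^sub>m n m) (0\<^sub>m m n) B) = char_poly A * char_poly B"
proof -
  have "char_poly_matrix (four_block_mat A (0\<^sub>m n m) (0\<^sub>m m n) B) =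
        four_block_mat (char_poly_matrix A) (0\<^sub>m n m) (0\<^sub>m m n) (char_poly_matrix B)"
    using A B by (intro eq_matI) (auto simp: char_poly_matrix_def)
  moreover have "det (four_block_mat (char_poly_matrix A) (0\<^sub>m n m) (0\<^sub>m m n) (char_poly_matrix B))
      = det (char_poly_matrix A) * det (char_poly_matrix B)"
    using A B by (intro det_four_block_mat_lower_left_zero) (auto simp: char_poly_matrix_def)
  ultimately show ?thesis
    unfolding char_poly_def by simp
qed

lemma char_poly_centro_mat:
  fixes x0 x1 x2 x3 y0 y1 y2 y3 :: "'a :: field_char_0"
  shows "char_poly (centro_mat x0 x1 x2 x3 y0 y1 y2 y3) =
         char_poly (mat2 (x0 + x3) (x1 + x2) (y0 + y3) (y1 + y2)) *
         char_poly (mat2 (x0 - x3) (x1 - x2) (y0 - y3) (y1 - y2))"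
proof -
  let ?Q = "centro_mat x0 x1 x2 x3 y0 y1 y2 y3"
  let ?M = "mat2 (x0 + x3) (x1 + x2) (y0 + y3) (y1 + y2)"
  let ?N = "mat2 (x0 - x3) (x1 - x2) (y0 - y3) (y1 - y2)"
  let ?B = "four_block_mat ?M (0\<^sub>m 2 2) (0\<^sub>m 2 2) ?N"
  let ?R = "mat 4 4 (\<lambda>(i,j). [[1,0,0,1],[0,1,1,0],[1,0,0,-1],[0,1,-1,0::'a]] ! i ! j)"
  let ?P = "(1/2) \<cdot>\<^sub>m transpose_mat ?R"
  have B: "?B \<in> carrier_mat 4 4"
    using four_block_carrier_mat[OF mat2_carrier mat2_carrier] by simp
  have PR: "?P * ?R = 1\<^sub>m 4" and RP: "?R * ?P = 1\<^sub>m 4"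
    by (auto intro!: eq_matI simp: less_4_cases scalar_prod_def sum_lessThan_4)
  have "?Q = ?P * ?B * ?R"
    using B by (intro eq_matI)
      (auto simp: centro_mat_def mat2_def less_4_cases scalar_prod_def sum_lessThan_4
        field_simps)
  then have "similar_mat ?Q ?B"
    using PR RP B by (intro similar_matI[where n = 4 and P = ?P and Q = ?R]) auto
  then have "char_poly ?Q = char_poly ?B"
    by (rule char_poly_similar)
  also have "\<dots> = char_poly ?M * char_poly ?N"
    by (rule char_poly_block_diag[OF mat2_carrier mat2_carrier])
  finally show ?thesis .
qed

lemma J4_mult_mult:
  assumes "Q \<in> carrier_mat 4 4"
  shows "J4 * Q * J4 = mat 4 4 (\<lambda>(i,j). Q $$ (3 - i, 3 - j))"
  using assms by (intro eq_matI) (auto simp: J4_def less_4_cases scalar_prod_def sum_lessThan_4)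

lemma centrosymmetric4_centro_mat: "centrosymmetric4 (centro_mat x0 x1 x2 x3 y0 y1 y2 y3)"
  unfolding centrosymmetric4_def J4_mult_mult[OF centro_mat_carrier]
  by (intro eq_matI) (auto simp: centro_mat_def less_4_cases)

lemma centrosymmetric4_imp_centro_mat:
  assumes Q: "Q \<in> carrier_mat 4 4" and "centrosymmetric4 Q"
  shows "Q = centro_mat (Q $$ (0,0)) (Q $$ (0,1)) (Q $$ (0,2)) (Q $$ (0,3))
                        (Q $$ (1,0)) (Q $$ (1,1)) (Q $$ (1,2)) (Q $$ (1,3))"
proof -
  have reflect: "mat 4 4 (\<lambda>(i,j). Q $$ (3 - i, 3 - j)) = Q"
    using assms by (simp add: centrosymmetric4_def J4_mult_mult)
  have flip: "Q $$ (i,j) = Q $$ (3 - i, 3 - j)" if "i < 4" "j < 4" for i j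
    using that by (subst (1) reflect[symmetric]) simp
  have "Q $$ (2,j) = Q $$ (1, 3 - j)" "Q $$ (3,j) = Q $$ (0, 3 - j)" if "j < 4" for j
    using flip[OF _ that, of 2] flip[OF _ that, of 3] by simp_all
  then show ?thesis
    using Q by (intro eq_matI) (auto simp: centro_mat_def less_4_cases)
qed

text \<open>The two equations say that the difference block N is normal.\<close>
lemma normal_centro_mat_diff_block:
  fixes x0 x1 x2 x3 y0 y1 y2 y3 :: real
  assumes "normal_real_mat (centro_mat x0 x1 x2 x3 y0 y1 y2 y3)"
  shows "(x1 - x2)\<^sup>2 = (y0 - y3)\<^sup>2" and "(x1 - x2 - (y0 - y3)) * (x0 - x3 - (y1 - y2)) = 0"
proof -
  let ?Q = "centro_mat x0 x1 x2 x3 y0 y1 y2 y3"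
  have e: "(?Q * transpose_mat ?Q) $$ (i,j) = (transpose_mat ?Q * ?Q) $$ (i,j)" for i j
    using assms by (simp add: normal_real_mat_def)
  have "x1*x1 + x2*x2 = y0*y0 + y3*y3" and "x1*x2 = y0*y3"
    and "x0*y0 + x1*y1 + x2*y2 + x3*y3 = x0*x1 + y0*y1 + y3*y2 + x3*x2"
    and "x0*y3 + x1*y2 + x2*y1 + x3*y0 = x0*x2 + y0*y2 + y3*y1 + x3*x1"
    using e[of 0 0] e[of 0 3] e[of 0 1] e[of 0 2]
    by (simp_all add: centro_mat_def scalar_prod_def sum_lessThan_4 algebra_simps)
  then show "(x1 - x2)\<^sup>2 = (y0 - y3)\<^sup>2" and "(x1 - x2 - (y0 - y3)) * (x0 - x3 - (y1 - y2)) = 0"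
    by (simp_all add: power2_eq_square algebra_simps)
qed

lemma normal_block_with_nonreal_eigenvalues:
  fixes p q r s a b :: real
  assumes normal: "q\<^sup>2 = r\<^sup>2" "(q - r) * (p - s) = 0"
    and trace: "p + s = 2 * a" and det: "p * s - q * r = a\<^sup>2 + b\<^sup>2" and "b > 0"
  shows "p = a" and "s = a" and "\<bar>q\<bar> = b" and "\<bar>r\<bar> = b"
proof -
  have "(p - s)\<^sup>2 = (p + s)\<^sup>2 - 4 * (p * s)"
    by (simp add: power2_eq_square algebra_simps)
  then have disc: "(p - s)\<^sup>2 = - 4 * b\<^sup>2 - 4 * (q * r)"
    using trace det by (simp add: power2_eq_square algebra_simps)
  moreover have "(p - s)\<^sup>2 \<ge> 0" "b\<^sup>2 > 0"
    using \<open>b > 0\<close> by simp_all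
  ultimately have "q * r < 0"
    by linarith
  then have "q \<noteq> r"
    by (metis not_square_less_zero)
  then have "p = s" and "r = - q"
    using normal by (auto simp: power2_eq_iff)
  then show "p = a" and "s = a"
    using trace by simp_all
  have "q\<^sup>2 = b\<^sup>2"
    using disc \<open>p = s\<close> \<open>r = - q\<close> by (simp add: power2_eq_square)
  then have "q = b \<or> q = - b"
    by (simp add: power2_eq_iff)
  then show "\<bar>q\<bar> = b" and "\<bar>r\<bar> = b"
    using \<open>b > 0\<close> \<open>r = - q\<close> by auto
qed

lemma eigenvalue_gap_ge_offdiag:
  fixes m11 m12 m21 m22 l0 l1 c :: real
  assumes trace: "m11 + m22 = l0 + l1" and det: "m11 * m22 - m12 * m21 = l0 * l1"
    and "l1 \<le> l0" and "0 \<le> c" and "c\<^sup>2 \<le> m12 * m21"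
  shows "2 * c \<le> l0 - l1"
proof -
  have "(l0 - l1)\<^sup>2 = (l0 + l1)\<^sup>2 - 4 * (l0 * l1)"
    by (simp add: power2_eq_square algebra_simps)
  also have "\<dots> = (m11 - m22)\<^sup>2 + 4 * (m12 * m21)"
    unfolding trace[symmetric] det[symmetric] by (simp add: power2_eq_square algebra_simps)
  also have "\<dots> \<ge> (2 * c)\<^sup>2"
    using \<open>c\<^sup>2 \<le> m12 * m21\<close> by (simp add: power_mult_distrib add_increasing)
  finally have "(2 * c)\<^sup>2 \<le> (l0 - l1)\<^sup>2" .
  moreover have "0 \<le> l0 - l1"
    using \<open>l1 \<le> l0\<close> by simp
  ultimately show ?thesis
    by (rule power2_le_imp_le)
qed

lemma monic_quadratic_root_Complex:
  fixes c0 c1 a b :: real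
  assumes "b \<noteq> 0" and "poly [:complex_of_real c0, complex_of_real c1, 1:] (Complex a b) = 0"
  shows "c1 = - 2 * a" and "c0 = a\<^sup>2 + b\<^sup>2"
proof -
  have re: "c0 + c1 * a + a * a - b * b = 0" and im: "(c1 + 2 * a) * b = 0"
    using assms(2) by (simp_all add: complex_eq_iff algebra_simps)
  from im show "c1 = - 2 * a"
    using \<open>b \<noteq> 0\<close> by simp
  with re show "c0 = a\<^sup>2 + b\<^sup>2"
    by (simp add: power2_eq_square)
qed

lemma conjugate_pair_factor:
  "[:- Complex a b, 1:] * [:- cnj (Complex a b), 1:] =
   [:complex_of_real (a\<^sup>2 + b\<^sup>2), complex_of_real (- 2 * a), 1:]"
  by (simp add: complex_eq_iff power2_eq_square)

lemma real_root_pair_factor: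
  "[:- complex_of_real l0, 1:] * [:- complex_of_real l1, 1:] =
   [:complex_of_real (l0 * l1), complex_of_real (- (l0 + l1)), 1:]"
  by (simp add: algebra_simps)

lemma quartic_factors_match:
  fixes c0 c1 d0 d1 l0 l1 a b :: real
  assumes "b > 0" and real_roots: "4 * c0 \<le> c1\<^sup>2"
    and factors: "[:complex_of_real c0, complex_of_real c1, 1:] * [:complex_of_real d0, complex_of_real d1, 1:] =
      [:- complex_of_real l0, 1:] * [:- complex_of_real l1, 1:] * [:- Complex a b, 1:] * [:- cnj (Complex a b), 1:]"
  shows "c0 = l0 * l1" and "c1 = - (l0 + l1)" and "d0 = a\<^sup>2 + b\<^sup>2" and "d1 = - 2 * a"
proof -
  let ?f = "[:complex_of_real c0, complex_of_real c1, 1:]"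
  let ?g = "[:complex_of_real d0, complex_of_real d1, 1:]"
  have "b \<noteq> 0"
    using \<open>b > 0\<close> by simp
  have "poly (?f * ?g) (Complex a b) = 0"
    unfolding factors poly_mult by simp
  moreover have "poly ?f (Complex a b) \<noteq> 0"
  proof
    assume "poly ?f (Complex a b) = 0"
    from monic_quadratic_root_Complex[OF \<open>b \<noteq> 0\<close> this]
    have "c1 = - 2 * a" and "c0 = a\<^sup>2 + b\<^sup>2" .
    then show False
      using real_roots \<open>b \<noteq> 0\<close> by (simp add: power_mult_distrib algebra_simps)
  qed
  ultimately have "poly ?g (Complex a b) = 0"
    by (simp only: poly_mult mult_eq_0_iff) simp
  from monic_quadratic_root_Complex[OF \<open>b \<noteq> 0\<close> this]
  show d: "d0 = a\<^sup>2 + b\<^sup>2" "d1 = - 2 * a" by simp_all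
  have "?f * ?g = ([:- complex_of_real l0, 1:] * [:- complex_of_real l1, 1:]) *
                  ([:- Complex a b, 1:] * [:- cnj (Complex a b), 1:])"
    by (simp only: factors mult.assoc)
  also have "\<dots> = [:complex_of_real (l0 * l1), complex_of_real (- (l0 + l1)), 1:] * ?g"
    by (simp only: conjugate_pair_factor real_root_pair_factor d(1)[symmetric] d(2)[symmetric])
  finally have "?f * ?g = [:complex_of_real (l0 * l1), complex_of_real (- (l0 + l1)), 1:] * ?g" .
  then have "?f = [:complex_of_real (l0 * l1), complex_of_real (- (l0 + l1)), 1:]"
    by (metis mult_right_cancel pCons_eq_0_iff one_neq_zero)
  then show "c0 = l0 * l1" and "c1 = - (l0 + l1)"
    by (simp_all only: pCons_eq_iff of_real_eq_iff)
qed

lemma nonneg_centro_mat_iff: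
  "nonneg_mat (centro_mat x0 x1 x2 x3 y0 y1 y2 y3) \<longleftrightarrow>
   0 \<le> x0 \<and> 0 \<le> x1 \<and> 0 \<le> x2 \<and> 0 \<le> x3 \<and> 0 \<le> y0 \<and> 0 \<le> y1 \<and> 0 \<le> y2 \<and> 0 \<le> y3"
    (is "nonneg_mat ?Q \<longleftrightarrow> _")
proof
  assume "nonneg_mat ?Q"
  then have entry: "0 \<le> ?Q $$ (i,j)" if "i < 4" "j < 4" for i j
    using that by (simp add: nonneg_mat_def carrier_matD[OF centro_mat_carrier])
  show "0 \<le> x0 \<and> 0 \<le> x1 \<and> 0 \<le> x2 \<and> 0 \<le> x3 \<and> 0 \<le> y0 \<and> 0 \<le> y1 \<and> 0 \<le> y2 \<and> 0 \<le> y3"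
    using entry[of 0 0] entry[of 0 1] entry[of 0 2] entry[of 0 3]
      entry[of 1 0] entry[of 1 1] entry[of 1 2] entry[of 1 3]
    by (simp add: centro_mat_def)
qed (auto simp: nonneg_mat_def centro_mat_def less_4_cases)

lemma char_poly_of_real_centro_mat:
  fixes x0 x1 x2 x3 y0 y1 y2 y3 :: real
  shows "char_poly (map_mat complex_of_real (centro_mat x0 x1 x2 x3 y0 y1 y2 y3)) =
    [:complex_of_real ((x0 + x3) * (y1 + y2) - (x1 + x2) * (y0 + y3)),
      complex_of_real (- (x0 + x3 + (y1 + y2))), 1:] *
    [:complex_of_real ((x0 - x3) * (y1 - y2) - (x1 - x2) * (y0 - y3)),
      complex_of_real (- (x0 - x3 + (y1 - y2))), 1:]"
proof -
  have "map_mat complex_of_real (centro_mat x0 x1 x2 x3 y0 y1 y2 y3) =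
        centro_mat (of_real x0) (of_real x1) (of_real x2) (of_real x3)
                   (of_real y0) (of_real y1) (of_real y2) (of_real y3)"
    by (intro eq_matI) (auto simp: centro_mat_def less_4_cases)
  then show ?thesis
    by (simp add: char_poly_centro_mat char_poly_mat2)
qed

lemma eigenvalues_are_four:
  "eigenvalues_are Q {#u, v, w, t#} \<longleftrightarrow>
   char_poly (map_mat complex_of_real Q) = [:- u, 1:] * [:- v, 1:] * [:- w, 1:] * [:- t, 1:]"
  unfolding eigenvalues_are_def
  by (simp only: image_mset_add_mset image_mset_empty prod_mset.add_mset prod_mset_empty
      mult_1_right mult.assoc)

lemma centro_mat_eigenvalue_bounds:
  fixes x0 x1 x2 x3 y0 y1 y2 y3 l0 l1 a b :: real
  defines "Q \<equiv> centro_mat x0 x1 x2 x3 y0 y1 y2 y3"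
  assumes "normal_real_mat Q" and "nonneg_mat Q"
    and "eigenvalues_are Q {#complex_of_real l0, complex_of_real l1, Complex a b, cnj (Complex a b)#}"
    and "b > 0" and "l1 \<le> l0"
  shows "2 * \<bar>a\<bar> \<le> l0 + l1" and "2 * b \<le> l0 - l1"
proof -
  have nonneg: "0 \<le> x0" "0 \<le> x1" "0 \<le> x2" "0 \<le> x3" "0 \<le> y0" "0 \<le> y1" "0 \<le> y2" "0 \<le> y3"
    using \<open>nonneg_mat Q\<close> by (simp_all add: Q_def nonneg_centro_mat_iff)
  have "(- (x0 + x3 + (y1 + y2)))\<^sup>2 - 4 * ((x0 + x3) * (y1 + y2) - (x1 + x2) * (y0 + y3)) =
        (x0 + x3 - (y1 + y2))\<^sup>2 + 4 * ((x1 + x2) * (y0 + y3))"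
    by (simp add: power2_eq_square algebra_simps)
  moreover have "0 \<le> (x1 + x2) * (y0 + y3)"
    using nonneg by simp
  ultimately have real_roots:
      "4 * ((x0 + x3) * (y1 + y2) - (x1 + x2) * (y0 + y3)) \<le> (- (x0 + x3 + (y1 + y2)))\<^sup>2"
    using zero_le_power2[of "x0 + x3 - (y1 + y2)"] by linarith
  have factors:
    "[:complex_of_real ((x0 + x3) * (y1 + y2) - (x1 + x2) * (y0 + y3)),
       complex_of_real (- (x0 + x3 + (y1 + y2))), 1:] *
     [:complex_of_real ((x0 - x3) * (y1 - y2) - (x1 - x2) * (y0 - y3)),
       complex_of_real (- (x0 - x3 + (y1 - y2))), 1:] =
     [:- complex_of_real l0, 1:] * [:- complex_of_real l1, 1:] *
     [:- Complex a b, 1:] * [:- cnj (Complex a b), 1:]"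
    using assms(4) by (simp only: Q_def eigenvalues_are_four char_poly_of_real_centro_mat)
  note match = quartic_factors_match[OF \<open>b > 0\<close> real_roots factors]
  have sum_block: "(x0 + x3) * (y1 + y2) - (x1 + x2) * (y0 + y3) = l0 * l1"
      "x0 + x3 + (y1 + y2) = l0 + l1"
    using match(1,2) by simp_all
  have diff_block: "x0 - x3 + (y1 - y2) = 2 * a"
      "(x0 - x3) * (y1 - y2) - (x1 - x2) * (y0 - y3) = a\<^sup>2 + b\<^sup>2"
    using match(3,4) by simp_all
  from normal_centro_mat_diff_block[OF \<open>normal_real_mat Q\<close>[unfolded Q_def]] diff_block \<open>b > 0\<close>
  have "x0 - x3 = a" "y1 - y2 = a" "\<bar>x1 - x2\<bar> = b" "\<bar>y0 - y3\<bar> = b"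
    by (auto intro: normal_block_with_nonreal_eigenvalues)
  with nonneg have "\<bar>a\<bar> \<le> x0 + x3" "\<bar>a\<bar> \<le> y1 + y2" "b \<le> x1 + x2" "b \<le> y0 + y3"
    by auto
  then show "2 * \<bar>a\<bar> \<le> l0 + l1"
    using sum_block by linarith
  have "b\<^sup>2 \<le> (x1 + x2) * (y0 + y3)"
    unfolding power2_eq_square using \<open>b \<le> x1 + x2\<close> \<open>b \<le> y0 + y3\<close> \<open>b > 0\<close>
    by (intro mult_mono) auto
  from eigenvalue_gap_ge_offdiag[OF sum_block(2,1) \<open>l1 \<le> l0\<close> _ this] \<open>b > 0\<close>
  show "2 * b \<le> l0 - l1"
    by simp
qed

text \<open>The witness is a polynomial in the permutation matrix of the 4-cycle 0, 1, 3, 2,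
  hence normal.\<close>
lemma normal_centro_mat_circulant: "normal_real_mat (centro_mat u v w t w u t v)"
  unfolding normal_real_mat_def
  by (intro eq_matI) (auto simp: centro_mat_def less_4_cases scalar_prod_def sum_lessThan_4 algebra_simps)

lemma centro_mat_realises_eigenvalues:
  fixes l0 l1 a b :: real
  assumes "0 \<le> b" and "2 * \<bar>a\<bar> \<le> l0 + l1" and "2 * b \<le> l0 - l1"
  shows "\<exists>Q. Q \<in> carrier_mat 4 4 \<and> normal_real_mat Q \<and> centrosymmetric4 Q \<and> nonneg_mat Q
           \<and> eigenvalues_are Q {#complex_of_real l0, complex_of_real l1, Complex a b, cnj (Complex a b)#}"
proof -
  define p q where "p = (l0 + l1) / 2" and "q = (l0 - l1) / 2"
  define u v w t where "u = (p + a) / 2" and "v = (q - b) / 2" and "w = (q + b) / 2" and "t = (p - a) / 2"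
  let ?Q = "centro_mat u v w t w u t v"
  have "\<bar>a\<bar> \<le> p" and "b \<le> q"
    using assms by (simp_all add: p_def q_def)
  then have "nonneg_mat ?Q"
    using \<open>0 \<le> b\<close> by (auto simp: nonneg_centro_mat_iff u_def v_def w_def t_def abs_le_iff)
  moreover have "eigenvalues_are ?Q {#complex_of_real l0, complex_of_real l1, Complex a b, cnj (Complex a b)#}"
  proof -
    have "(u + t) * (u + t) - (v + w) * (w + v) = l0 * l1" "- (u + t + (u + t)) = - (l0 + l1)"
      "(u - t) * (u - t) - (v - w) * (w - v) = a\<^sup>2 + b\<^sup>2" "- (u - t + (u - t)) = - 2 * a"
      unfolding u_def v_def w_def t_def p_def q_def by (simp_all add: field_simps power2_eq_square)
    then show ?thesis
      unfolding eigenvalues_are_four char_poly_of_real_centro_mat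
      by (simp only: real_root_pair_factor conjugate_pair_factor mult.assoc)
  qed
  ultimately show ?thesis
    by (intro exI[of _ ?Q]) (simp add: normal_centro_mat_circulant centrosymmetric4_centro_mat)
qed

lemma centrosymmetric4_eigenvalue_bounds:
  fixes l0 l1 a b :: real
  assumes "Q \<in> carrier_mat 4 4" and "centrosymmetric4 Q" and "normal_real_mat Q" and "nonneg_mat Q"
    and "eigenvalues_are Q {#complex_of_real l0, complex_of_real l1, Complex a b, cnj (Complex a b)#}"
    and "b > 0" and "l1 \<le> l0"
  shows "2 * \<bar>a\<bar> \<le> l0 + l1 \<and> 2 * b \<le> l0 - l1"
proof -
  have "Q = centro_mat (Q $$ (0,0)) (Q $$ (0,1)) (Q $$ (0,2)) (Q $$ (0,3))
                       (Q $$ (1,0)) (Q $$ (1,1)) (Q $$ (1,2)) (Q $$ (1,3))"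
    using assms(1,2) by (rule centrosymmetric4_imp_centro_mat)
  with assms show ?thesis
    using centro_mat_eigenvalue_bounds[of "Q $$ (0,0)" "Q $$ (0,1)" "Q $$ (0,2)" "Q $$ (0,3)"
        "Q $$ (1,0)" "Q $$ (1,1)" "Q $$ (1,2)" "Q $$ (1,3)" l0 l1 a b] by auto
qed

theorem theorem3p2:
  fixes l0 l1 a b :: real
  assumes "b > 0"
    and "l0 \<ge> max l1 (cmod (Complex a b))"
  shows "(\<exists>Q :: real mat. Q \<in> carrier_mat 4 4 \<and> normal_real_mat Q \<and> centrosymmetric4 Q
            \<and> nonneg_mat Q
            \<and> eigenvalues_are Q {# complex_of_real l0, complex_of_real l1, Complex a b, cnj (Complex a b) #})
         \<longleftrightarrow> (l0 + l1 - 2 * \<bar>a\<bar> \<ge> 0 \<and> l0 - l1 - 2 * \<bar>b\<bar> \<ge> 0)"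
proof -
  have "l1 \<le> l0"
    using assms(2) by simp
  with \<open>b > 0\<close> show ?thesis
    using centrosymmetric4_eigenvalue_bounds[of _ l0 l1 a b] centro_mat_realises_eigenvalues[of b a l0 l1]
    by auto
qed

end
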